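(* Let $q\in(0,\tfrac12)$ and let $T\sim U(1,2)$, $S\sim U(-1,0)$ be independent. Let $p_3^{PD}$ be the probability that the polynomial $$P_{T,S}(x)=(T+S-1)x^3+\big(1-T-2S+q(S-1-T)\big)x^2+\big(S+q(T-S)\big)x$$ has exactly three distinct roots in $[0,1]$. Then $$ p_3^{PD}=\begin{cases} \dfrac{1}{1-2q}\Big[-\dfrac{2\big(q^3+3q^2+(4\sqrt{1-2q}-6)q-2\sqrt{1-2q}+2\big)}{3q}-\dfrac{q^3}{2(1-q)}\Big], & 0< q\leq \frac{3-\sqrt{5}}{2},\\[3mm] \dfrac{-16 \left(\sqrt{1-2 q}-1\right) q^{3/2}+2 q^{5/2}+15 q^3+\left(8 \sqrt{1-2 q}-25\right) q^2+q-8 \sqrt{1-2 q}+2 \sqrt{q} \left(8 \sqrt{1-2 q}-5\right)+5}{6 \left(\sqrt{q}-1\right)^3 \left(q^{3/2}+q\right)}, & \frac{3-\sqrt{5}}{2}<q\leq \frac49,\\[3mm] \dfrac{(1-2q)^2}{2q(1-q)}, & \frac49<q<\frac12. \end{cases} $$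
   Context: This models the replicator–mutator dynamics of a two-player two-strategy Prisoner's Dilemma with payoff entries $a_{11}=1$, $a_{22}=0$, $a_{21}=T$, $a_{12}=S$ and symmetric mutation probability $q$; the equilibria of the dynamics are exactly the distinct roots in $[0,1]$ of $P_{T,S}$, and "the game has $k$ equilibria" means $P_{T,S}$ has exactly $k$ distinct roots in $[0,1]$. *)

theory Defs
  imports "HOL-Probability.Probability"
begin

definition P_TS :: "real \<Rightarrow> real \<Rightarrow> real \<Rightarrow> real \<Rightarrow> real" where
  "P_TS q T S x = (T + S - 1) * x ^ 3 + (1 - T - 2 * S + q * (S - 1 - T)) * x ^ 2
                  + (S + q * (T - S)) * x"

definition TS_dist :: "(real \<times> real) measure" where
  "TS_dist = uniform_measure lborel {1..2::real} \<Otimes>\<^sub>M uniform_measure lborel {-1..0::real}"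

definition p3_PD :: "real \<Rightarrow> real" where
  "p3_PD q = measure TS_dist {(T, S). card {x \<in> {0..1}. P_TS q T S x = 0} = 3}"

end

theory Submission
  imports Defs
begin

text \<open>
  Write \<open>P(x) = x Q(x)\<close>. Since \<open>Q(1) = -q < 0\<close>, \<open>P\<close> has three distinct roots in \<open>[0,1]\<close> iff
  \<open>Q\<close> has two distinct roots in \<open>(0,1)\<close>, which amounts to sign conditions on the coefficients
  of \<open>Q\<close> and a positive discriminant. For fixed \<open>T\<close> these conditions cut out an interval of
  values of \<open>S\<close>; its upper ends are linear in \<open>T\<close> and its lower end is \<open>max (-1) r(T)\<close>, where
  \<open>r(T) = (2\<surd>((1-2q)T) - (1-q)(T+1))/q\<close> is the zero of the discriminant. By Fubini the
  probability is the integral over \<open>T \<in> [1,2]\<close> of the interval length, which is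
  \<open>-qT/(1-q) - r(T)\<close> until \<open>r\<close> reaches \<open>-1\<close>, then \<open>1 - qT/(1-q)\<close> until \<open>-qT/(1-q)\<close> reaches
  \<open>-1\<close>, and zero once the discriminant can no longer be positive. The three regimes of \<open>q\<close>
  are the possible positions of these breakpoints relative to \<open>1\<close> and \<open>2\<close>.
\<close>

lemma divide_le_divide_iff:
  fixes a b c d :: "'a::linordered_field"
  assumes "0 < c" "0 < d"
  shows "a/c \<le> b/d \<longleftrightarrow> a*d \<le> b*c"
  using assms by (simp add: field_simps)

lemma le_square_iff_sqrt_le: "0 \<le> c \<Longrightarrow> T \<le> c^2 \<longleftrightarrow> sqrt T \<le> c"
  using real_sqrt_le_iff[of T "c^2"] by simp

lemma square_le_iff_le_sqrt: "0 \<le> c \<Longrightarrow> c^2 \<le> T \<longleftrightarrow> c \<le> sqrt T"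
  using real_sqrt_le_iff[of "c^2" T] by simp

lemma DERIV_T_sqrt_T:
  assumes "0 < T"
  shows "((\<lambda>T. (2/3)*(T * sqrt T)) has_real_derivative sqrt T) (at T)"
proof -
  have "T * inverse (sqrt T) = sqrt T" using assms by (metis divide_inverse real_div_sqrt less_imp_le)
  thus ?thesis using assms by (auto intro!: derivative_eq_intros simp: field_simps)
qed

section \<open>Three roots of the replicator-mutator polynomial\<close>

lemma quadratic_coeffs_of_two_roots:
  fixes a b c x1 x2 :: real
  assumes neg: "a + b + c < 0"
    and r1: "a*x1^2 + b*x1 + c = 0" and r2: "a*x2^2 + b*x2 + c = 0"
    and ne: "x1 \<noteq> x2" and x1: "0 < x1" "x1 < 1" and x2: "0 < x2" "x2 < 1"
  shows "a < 0 \<and> c < 0 \<and> 0 < b \<and> b < -2*a \<and> 0 < b^2 - 4*a*c"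
proof -
  have "(x1 - x2) * (a*(x1+x2) + b) = 0" using r1 r2 by (simp add: algebra_simps power2_eq_square)
  hence hb: "b = -a*(x1+x2)" using ne by simp
  have hc: "c = a*x1*x2" using r1 hb by (simp add: algebra_simps power2_eq_square)
  have "a*((1-x1)*(1-x2)) = a + b + c" using hb hc by (simp add: algebra_simps)
  moreover have "(1-x1)*(1-x2) > 0" using x1 x2 by simp
  ultimately have ha: "a < 0" using neg by (smt (verit) mult_nonneg_nonneg)
  have "c < 0" unfolding hc using ha x1 x2 by (simp add: mult.assoc mult_neg_pos)
  moreover have "0 < b" unfolding hb using ha x1 x2 by (simp add: mult_neg_pos)
  moreover have "b < -2*a"
  proof -
    have "(-a)*(x1+x2) < (-a)*2" using ha x1 x2 by (intro mult_strict_left_mono) auto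
    thus ?thesis unfolding hb by simp
  qed
  moreover have "b^2 - 4*a*c = a^2*(x1-x2)^2" unfolding hb hc by (simp add: algebra_simps power2_eq_square)
  ultimately show ?thesis using ha ne by simp
qed

lemma card_roots_unit_interval_of_coeffs:
  fixes a b c :: real
  assumes neg: "a + b + c < 0"
    and a: "a < 0" and c: "c < 0" and b: "0 < b" "b < -2*a" and disc: "0 < b^2 - 4*a*c"
  shows "card {x\<in>{0..1}. x * (a*x^2 + b*x + c) = 0} = 3"
proof -
  define r where "r = sqrt (b^2 - 4*a*c)"
  have r0: "r > 0" and rr: "r^2 = b^2 - 4*a*c" using disc by (auto simp: r_def)
  define x1 where "x1 = (-b + r)/(2*a)"
  define x2 where "x2 = (-b - r)/(2*a)"
  have factor: "a*x^2 + b*x + c = a*(x - x1)*(x - x2)" for x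
  proof -
    have "4*a*(a*(x - x1)*(x - x2)) = (2*a*x + b - r)*(2*a*x + b + r)"
      unfolding x1_def x2_def using a by (simp add: field_simps)
    also have "\<dots> = 4*a*(a*x^2 + b*x + c)" using rr by (simp add: algebra_simps power2_eq_square)
    finally show ?thesis using a by simp
  qed
  have "r < b"
  proof -
    have "r^2 < b^2" using rr a c by (smt (verit) mult_neg_neg)
    thus ?thesis using b r0 by (smt (verit) power_mono)
  qed
  hence x1_pos: "0 < x1" unfolding x1_def using a by (intro divide_neg_neg) auto
  have "r < -b - 2*a"
  proof -
    have "(-b-2*a)^2 - r^2 = 4*a*(a+b+c)" using rr by (simp add: algebra_simps power2_eq_square)
    also have "\<dots> > 0" using neg a by (simp add: mult_neg_neg)
    finally have "r^2 < (-b-2*a)^2" by simp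
    thus ?thesis using b r0 by (smt (verit) power_mono)
  qed
  hence x2_less_1: "x2 < 1" unfolding x2_def using a by (simp add: field_simps)
  have x1_less_x2: "x1 < x2" unfolding x1_def x2_def using a r0 by (simp add: field_simps mult_neg_pos)
  have "{x\<in>{0..1}. x * (a*x^2 + b*x + c) = 0} = {0, x1, x2}"
    unfolding factor using x1_pos x2_less_1 x1_less_x2 a by auto
  moreover have "card {0, x1, x2} = 3" using x1_pos x1_less_x2 by auto
  ultimately show ?thesis by simp
qed

text \<open>A root at \<open>1\<close> is excluded by \<open>a + b + c < 0\<close>, so the two nonzero roots lie in \<open>(0,1)\<close>.\<close>
lemma card_roots_unit_interval_eq_3_iff:
  fixes a b c :: real
  assumes neg: "a + b + c < 0"
  shows "card {x\<in>{0..1}. x * (a*x^2 + b*x + c) = 0} = 3 \<longleftrightarrow>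
         a < 0 \<and> c < 0 \<and> 0 < b \<and> b < -2*a \<and> 0 < b^2 - 4*a*c"
proof
  assume "a < 0 \<and> c < 0 \<and> 0 < b \<and> b < -2*a \<and> 0 < b^2 - 4*a*c"
  thus "card {x\<in>{0..1}. x * (a*x^2 + b*x + c) = 0} = 3"
    using card_roots_unit_interval_of_coeffs[OF neg] by blast
next
  define Z where "Z = {x\<in>{0..1}. x * (a*x^2 + b*x + c) = 0}"
  assume "card {x\<in>{0..1}. x * (a*x^2 + b*x + c) = 0} = 3"
  hence card: "card Z = 3" unfolding Z_def .
  hence "finite Z" by (metis card.infinite zero_neq_numeral)
  moreover have "0 \<in> Z" unfolding Z_def by simp
  ultimately have "card (Z - {0}) = 2" using card by simp
  then obtain x1 x2 where Z0: "Z - {0} = {x1, x2}" and ne: "x1 \<noteq> x2" by (meson card_2_iff)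
  have "1 \<notin> Z" unfolding Z_def using neg by simp
  moreover have "x1 \<in> Z - {0}" "x2 \<in> Z - {0}" using Z0 by auto
  ultimately have "0 < x1" "x1 < 1" "a*x1^2 + b*x1 + c = 0"
    and "0 < x2" "x2 < 1" "a*x2^2 + b*x2 + c = 0"
    unfolding Z_def by (auto simp: less_le)
  thus "a < 0 \<and> c < 0 \<and> 0 < b \<and> b < -2*a \<and> 0 < b^2 - 4*a*c"
    using quadratic_coeffs_of_two_roots[OF neg _ _ ne] by blast
qed

definition PD_three_roots :: "real \<Rightarrow> real \<Rightarrow> real \<Rightarrow> bool" where
  "PD_three_roots q T S \<longleftrightarrow>
     (let a = T + S - 1; b = 1 - T - 2*S + q*(S - 1 - T); c = S + q*(T - S)
      in a < 0 \<and> c < 0 \<and> 0 < b \<and> b < -2*a \<and> 0 < b^2 - 4*a*c)"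

lemma P_TS_eq:
  "P_TS q T S x = x * ((T+S-1)*x^2 + (1 - T - 2*S + q*(S - 1 - T))*x + (S + q*(T-S)))"
  unfolding P_TS_def by (simp add: algebra_simps power2_eq_square power3_eq_cube)

lemma card_roots_P_TS_eq_3_iff:
  assumes "0 < q"
  shows "card {x\<in>{0..1}. P_TS q T S x = 0} = 3 \<longleftrightarrow> PD_three_roots q T S"
  unfolding P_TS_eq PD_three_roots_def Let_def
  by (rule card_roots_unit_interval_eq_3_iff) (use assms in \<open>simp add: algebra_simps\<close>)

lemma measurable_PD_three_roots:
  "Measurable.pred (borel \<Otimes>\<^sub>M borel) (\<lambda>p::real\<times>real. PD_three_roots q (fst p) (snd p))"
  unfolding PD_three_roots_def Let_def by measurable

lemma measurable_PD_three_roots_section: "Measurable.pred borel (\<lambda>S::real. PD_three_roots q T S)"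
  unfolding PD_three_roots_def Let_def by measurable

lemma sets_TS_dist: "sets TS_dist = sets (borel \<Otimes>\<^sub>M borel :: (real \<times> real) measure)"
  unfolding TS_dist_def by (intro sets_pair_measure_cong) auto

section \<open>Reduction to an integral over \<open>T\<close>\<close>

text \<open>
  The parameters \<open>w\<close> and \<open>v\<close> name \<open>\<surd>(1-2q)\<close> and \<open>\<surd>q\<close> as variables so that the algebraic
  identities below are polynomial identities.
\<close>
locale PD_mutation =
  fixes q w v :: real
  assumes q_pos: "0 < q" and q_less_half: "q < 1/2"
    and w_eq: "w = sqrt (1 - 2*q)" and v_eq: "v = sqrt q"
begin

lemma w_pos: "0 < w" and w_less_1: "w < 1" and w_square: "w^2 = 1 - 2*q"
  using q_pos q_less_half by (auto simp: w_eq)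

lemma v_pos: "0 < v" and v_less_1: "v < 1" and v_square: "v^2 = q"
  using q_pos q_less_half by (auto simp: v_eq)

lemma q_less_v: "q < v"
proof -
  have "v * v < v * 1" using v_pos v_less_1 by (intro mult_strict_left_mono) auto
  thus ?thesis using v_square by (simp add: power2_eq_square)
qed

definition disc_root :: "real \<Rightarrow> real" where
  "disc_root T = (2*w * sqrt T - (1-q)*(T+1))/q"

definition section_upper :: "real \<Rightarrow> real" where
  "section_upper T = min 0 (min (1-T) (min (-q*T/(1-q))
     (min (((1-q) - T*(1+q))/(2-q)) ((1+q-T*(1-q))/q))))"

definition section_length :: "real \<Rightarrow> real" where
  "section_length T = max 0 (section_upper T - max (-1) (disc_root T))"

lemma PD_three_roots_iff_section:
  assumes T: "1 \<le> T" and S: "-1 \<le> S"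
  shows "PD_three_roots q T S \<longleftrightarrow> S < 1-T \<and> S < -q*T/(1-q) \<and> S < ((1-q) - T*(1+q))/(2-q)
     \<and> S < (1+q-T*(1-q))/q \<and> disc_root T < S"
proof -
  define W where "W = (1-q)*T + q*S + 1 - q"
  have "(1-q)*T \<ge> 1-q" using mult_left_mono[of 1 T "1-q"] T q_less_half by simp
  moreover have "q*S \<ge> -q" using mult_left_mono[of "-1" S q] S q_pos by simp
  ultimately have W_pos: "W > 0" unfolding W_def using q_less_half by linarith
  have "(2*w * sqrt T)^2 = 4*((1-2*q)*T)" using T w_square by (simp add: power_mult_distrib)
  hence disc: "(1 - T - 2*S + q*(S - 1 - T))^2 - 4*(T + S - 1)*(S + q*(T - S)) = W^2 - (2*w * sqrt T)^2"
    unfolding W_def by (simp add: algebra_simps power2_eq_square)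
  have "0 \<le> 2*w * sqrt T" using w_pos T by simp
  hence "0 < W^2 - (2*w * sqrt T)^2 \<longleftrightarrow> 2*w * sqrt T < W"
    using W_pos power2_less_imp_less[of "2*w * sqrt T" W] power_strict_mono[of "2*w * sqrt T" W 2]
    by auto
  also have "\<dots> \<longleftrightarrow> disc_root T < S"
    unfolding disc_root_def W_def using q_pos by (simp add: field_simps)
  finally have "0 < W^2 - (2*w * sqrt T)^2 \<longleftrightarrow> disc_root T < S" .
  moreover have "S + q*(T - S) < 0 \<longleftrightarrow> S < -q*T/(1-q)"
    and "0 < 1 - T - 2*S + q*(S - 1 - T) \<longleftrightarrow> S < ((1-q) - T*(1+q))/(2-q)"
    and "1 - T - 2*S + q*(S - 1 - T) < -2*(T + S - 1) \<longleftrightarrow> S < (1+q-T*(1-q))/q"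
    using q_pos q_less_half by (simp_all add: field_simps)
  ultimately show ?thesis unfolding PD_three_roots_def Let_def disc by auto
qed

lemma emeasure_section:
  assumes T: "1 \<le> T"
  shows "emeasure lborel ({-1..0} \<inter> {S. PD_three_roots q T S}) = ennreal (section_length T)"
proof -
  define E where "E = {-1..0} \<inter> {S. PD_three_roots q T S}"
  define lo where "lo = max (-1) (disc_root T)"
  define hi where "hi = section_upper T"
  have E_sets: "E \<in> sets lborel"
    unfolding E_def using measurable_PD_three_roots_section[of q T] by (simp add: pred_def)
  have E_sub: "E \<subseteq> {lo..hi}"
  proof
    fix S assume "S \<in> E"
    hence "-1 \<le> S" "S \<le> 0" "PD_three_roots q T S" unfolding E_def by auto
    thus "S \<in> {lo..hi}" unfolding PD_three_roots_iff_section[OF T \<open>-1 \<le> S\<close>] lo_def hi_def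
      section_upper_def by auto
  qed
  have sub_E: "{lo<..<hi} \<subseteq> E"
  proof
    fix S assume "S \<in> {lo<..<hi}"
    hence S: "lo < S" "S < hi" by auto
    hence "-1 \<le> S" unfolding lo_def by simp
    thus "S \<in> E" using S PD_three_roots_iff_section[OF T \<open>-1 \<le> S\<close>]
      unfolding E_def lo_def hi_def section_upper_def by auto
  qed
  show ?thesis
  proof (cases "lo \<le> hi")
    case True
    have "emeasure lborel E \<le> ennreal (hi - lo)"
      using emeasure_mono[OF E_sub, of lborel] True by simp
    moreover have "ennreal (hi - lo) \<le> emeasure lborel E"
      using emeasure_mono[OF sub_E E_sets] True by simp
    ultimately have "emeasure lborel E = ennreal (hi - lo)" by (rule antisym)
    moreover have "section_length T = hi - lo" unfolding section_length_def lo_def hi_def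
      using True lo_def hi_def by simp
    ultimately show ?thesis unfolding E_def by simp
  next
    case False
    hence "E = {}" using E_sub by auto
    moreover have "section_length T = 0" unfolding section_length_def
      using False unfolding lo_def hi_def by linarith
    ultimately show ?thesis unfolding E_def by simp
  qed
qed

lemma emeasure_uniform_section:
  assumes "T \<in> {1..2}"
  shows "emeasure (uniform_measure lborel {-1..0}) {S. PD_three_roots q T S} = ennreal (section_length T)"
proof -
  have "{S. PD_three_roots q T S} \<in> sets lborel"
    using measurable_PD_three_roots_section[of q T] by (simp add: pred_def)
  hence "emeasure (uniform_measure lborel {-1..0}) {S. PD_three_roots q T S}
      = emeasure lborel ({-1..0} \<inter> {S. PD_three_roots q T S}) / emeasure lborel {-1..0::real}"
    by (intro emeasure_uniform_measure) auto
  thus ?thesis using emeasure_section assms by (simp add: divide_ennreal_def)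
qed

lemma p3_PD_eq_integral:
  assumes I: "(section_length has_integral I) {1..2}"
  shows "p3_PD q = I"
proof -
  define U1 where "U1 = uniform_measure lborel {1..2::real}"
  define U2 where "U2 = uniform_measure lborel {-1..0::real}"
  define X where "X = {(T, S). card {x \<in> {0..1}. P_TS q T S x = 0} = 3}"
  have X: "X = {p. PD_three_roots q (fst p) (snd p)}"
    unfolding X_def using card_roots_P_TS_eq_3_iff[OF q_pos] by auto
  have "prob_space U2" unfolding U2_def by (intro prob_space_uniform_measure) auto
  hence U2_finite: "sigma_finite_measure U2" by (rule prob_space_imp_sigma_finite)
  have "X \<in> sets TS_dist" unfolding X sets_TS_dist
    using measurable_PD_three_roots[of q] by (simp add: pred_def space_pair_measure)
  hence "emeasure TS_dist X = (\<integral>\<^sup>+T. emeasure U2 (Pair T -` X) \<partial>U1)"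
    unfolding TS_dist_def U1_def[symmetric] U2_def[symmetric]
    by (rule sigma_finite_measure.emeasure_pair_measure_alt[OF U2_finite])
  also have "\<dots> = (\<integral>\<^sup>+T. ennreal (section_length T) \<partial>U1)"
    unfolding U1_def U2_def X
    by (intro nn_integral_cong_AE AE_uniform_measureI AE_I2) (auto simp: emeasure_uniform_section)
  also have "\<dots> = (\<integral>\<^sup>+T. ennreal (section_length T) * indicator {1..2} T \<partial>lborel)
                    / emeasure lborel {1..2::real}"
    unfolding U1_def section_length_def section_upper_def disc_root_def
    by (rule nn_integral_uniform_measure) auto
  also have "\<dots> = ennreal I"
    using nn_integral_has_integral_lebesgue'[OF _ I]
    by (simp add: section_length_def divide_ennreal_def)
  finally have "emeasure TS_dist X = ennreal I" .
  moreover have "I \<ge> 0" using has_integral_nonneg[OF I] by (simp add: section_length_def)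
  ultimately show ?thesis unfolding p3_PD_def X_def[symmetric] measure_def by simp
qed

section \<open>The length of a section\<close>

lemma disc_root_square: "0 \<le> t \<Longrightarrow> disc_root (t^2) = (2*w*t - (1-q)*(t^2+1))/q"
  unfolding disc_root_def by simp

lemma section_upper_eq:
  assumes T: "0 \<le> T" and below: "(1-2*q)*T \<le> (1-q)^2"
  shows "section_upper T = -q*T/(1-q)"
proof -
  have "-q*T/(1-q) \<le> 0" using q_pos q_less_half T by (simp add: divide_nonpos_pos)
  moreover have "(1-q)^2 \<le> 1-q" using q_pos q_less_half
    by (simp add: power2_eq_square mult_le_cancel_right1)
  hence "-q*T \<le> (1-T)*(1-q)" using below by (simp add: algebra_simps)
  hence "-q*T/(1-q) \<le> 1-T" using q_less_half by (subst pos_divide_le_eq) auto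
  moreover have "(-q*T)*(2-q) \<le> ((1-q) - T*(1+q))*(1-q)"
    using below by (simp add: algebra_simps power2_eq_square)
  hence "-q*T/(1-q) \<le> ((1-q) - T*(1+q))/(2-q)" using q_pos q_less_half by (simp add: field_simps)
  moreover have "(1-q)^2 \<le> 1 - q^2" using q_pos q_less_half by (simp add: power2_eq_square algebra_simps)
  hence "(-q*T)*q \<le> (1+q-T*(1-q))*(1-q)" using below by (simp add: algebra_simps power2_eq_square)
  hence "-q*T/(1-q) \<le> (1+q-T*(1-q))/q" using q_pos q_less_half by (simp add: field_simps)
  ultimately show ?thesis unfolding section_upper_def by linarith
qed

lemma disc_root_plus_1_eq:
  assumes "0 \<le> t"
  shows "(disc_root (t^2) + 1) * (q * (1-q)) = -(((1-q)*t - w*(1-v)) * ((1-q)*t - w*(1+v)))"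
  unfolding disc_root_square[OF assms] using q_pos q_less_half
  by (simp add: field_simps) (use w_square v_square in algebra)

lemma floor_factor_pos:
  assumes "1 \<le> t"
  shows "0 < (1-q)*t - w*(1-v)"
proof -
  have "w*(1-v) \<le> 1-v" using w_less_1 v_less_1 by (simp add: mult_le_cancel_right1)
  moreover have "1-q \<le> (1-q)*t" using assms q_less_half by (simp add: mult_le_cancel_left1)
  ultimately show ?thesis using q_less_v by linarith
qed

lemma disc_root_ge_minus_1:
  assumes t: "1 \<le> t" and "(1-q)*t \<le> w*(1+v)"
  shows "-1 \<le> disc_root (t^2)"
proof -
  have "((1-q)*t - w*(1-v)) * ((1-q)*t - w*(1+v)) \<le> 0"
    using floor_factor_pos[OF t] assms(2) by (simp add: mult_nonneg_nonpos)
  hence "0 \<le> (disc_root (t^2) + 1) * (q * (1-q))" using disc_root_plus_1_eq t by simp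
  moreover have "0 < q * (1-q)" using q_pos q_less_half by simp
  ultimately show ?thesis by (simp add: zero_le_mult_iff)
qed

lemma disc_root_le_minus_1:
  assumes t: "1 \<le> t" and "w*(1+v) \<le> (1-q)*t"
  shows "disc_root (t^2) \<le> -1"
proof -
  have "0 \<le> ((1-q)*t - w*(1-v)) * ((1-q)*t - w*(1+v))"
    using floor_factor_pos[OF t] assms(2) by simp
  hence "(disc_root (t^2) + 1) * (q * (1-q)) \<le> 0" using disc_root_plus_1_eq t by simp
  thus ?thesis using q_pos q_less_half by (simp add: mult_le_0_iff)
qed

lemma section_upper_eq_square:
  assumes "0 \<le> t" "w*t \<le> 1-q"
  shows "section_upper (t^2) = -q*t^2/(1-q)"
proof (rule section_upper_eq)
  have "(w*t)^2 \<le> (1-q)^2" using assms w_pos by (intro power_mono) auto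
  thus "(1-2*q)*t^2 \<le> (1-q)^2" using w_square by (simp add: power_mult_distrib)
qed simp

lemma section_length_before_floor:
  assumes t: "1 \<le> t" and "w*t \<le> 1-q" and "(1-q)*t \<le> w*(1+v)"
  shows "section_length (t^2) = -q*t^2/(1-q) - disc_root (t^2)"
proof -
  have "-q*t^2/(1-q) - disc_root (t^2) = (w*t - (1-q))^2/(q*(1-q))"
    unfolding disc_root_square[OF order.trans[OF zero_le_one t]] using q_pos q_less_half
    by (simp add: field_simps) (use w_square in algebra)
  hence "0 \<le> -q*t^2/(1-q) - disc_root (t^2)" using q_pos q_less_half by simp
  thus ?thesis unfolding section_length_def using assms
    by (simp add: section_upper_eq_square disc_root_ge_minus_1)
qed

lemma section_length_after_floor:
  assumes t: "1 \<le> t" and "w*t \<le> 1-q" and "w*(1+v) \<le> (1-q)*t" and "q*t^2 \<le> 1-q"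
  shows "section_length (t^2) = 1 - q*t^2/(1-q)"
proof -
  have "-q*t^2/(1-q) \<ge> -1" using assms(4) q_less_half by (simp add: le_divide_eq)
  thus ?thesis unfolding section_length_def using assms
    by (simp add: section_upper_eq_square disc_root_le_minus_1)
qed

lemma section_length_beyond_edge:
  assumes "1-q \<le> q*T"
  shows "section_length T = 0"
proof -
  have "section_upper T \<le> -q*T/(1-q)" unfolding section_upper_def by simp
  moreover have "-q*T/(1-q) \<le> -1" using assms q_less_half by (simp add: divide_le_eq)
  ultimately show ?thesis unfolding section_length_def by simp
qed

text \<open>Past this point the discriminant root exceeds one of the two last upper bounds.\<close>
lemma section_length_beyond_disc:
  assumes t: "0 \<le> t" and wt: "1-q \<le> w*t"
  shows "section_length (t^2) = 0"
proof (cases "w*t \<le> 1")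
  case True
  have "disc_root (t^2) - ((1-q) - t^2*(1+q))/(2-q) = -2*(w*t - 1)*(w*t - (1-q))/(q*(2-q))"
    unfolding disc_root_square[OF t] using q_pos q_less_half
    by (simp add: field_simps) (use w_square in algebra)
  moreover have "0 \<le> -2*(w*t - 1)*(w*t - (1-q))"
    using True wt by (simp add: mult_nonpos_nonneg mult_nonneg_nonpos)
  hence "0 \<le> -2*(w*t - 1)*(w*t - (1-q))/(q*(2-q))" using q_pos q_less_half by simp
  ultimately have "((1-q) - t^2*(1+q))/(2-q) \<le> disc_root (t^2)" by simp
  moreover have "section_upper (t^2) \<le> ((1-q) - t^2*(1+q))/(2-q)" unfolding section_upper_def by simp
  ultimately show ?thesis unfolding section_length_def by simp
next
  case False
  have "disc_root (t^2) - (1+q-t^2*(1-q))/q = 2*(w*t - 1)/q"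
    unfolding disc_root_square[OF t] using q_pos by (simp add: field_simps)
  moreover have "0 \<le> 2*(w*t - 1)/q" using False q_pos by simp
  ultimately have "(1+q-t^2*(1-q))/q \<le> disc_root (t^2)" by simp
  moreover have "section_upper (t^2) \<le> (1+q-t^2*(1-q))/q" unfolding section_upper_def by simp
  ultimately show ?thesis unfolding section_length_def by simp
qed

section \<open>Integrating the section length\<close>

text \<open>
  \<open>r\<close> reaches \<open>-1\<close> at \<open>T_floor\<close>, the bound \<open>-qT/(1-q)\<close> reaches \<open>-1\<close> at \<open>T_edge\<close>, and
  from \<open>T_disc\<close> on the section is empty.
\<close>
definition T_disc :: real where "T_disc = ((1-q)/w)^2"
definition T_floor :: real where "T_floor = (w*(1+v)/(1-q))^2"
definition T_edge :: real where "T_edge = (1-q)/q"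

definition F_disc :: "real \<Rightarrow> real" where
  "F_disc T = - (q/(1-q)) * (T^2/2) - (2*w/q) * ((2/3) * (T * sqrt T)) + ((1-q)/q) * ((T+1)^2/2)"

definition F_floor :: "real \<Rightarrow> real" where
  "F_floor T = T - (q/(1-q)) * (T^2/2)"

lemma has_integral_F_disc:
  assumes "0 < a" "a \<le> b"
  shows "((\<lambda>T. -q*T/(1-q) - disc_root T) has_integral (F_disc b - F_disc a)) {a..b}"
proof (rule fundamental_theorem_of_calculus[OF assms(2)],
    unfold has_real_derivative_iff_has_vector_derivative[symmetric])
  fix T assume "T \<in> {a..b}"
  hence T: "0 < T" using assms by auto
  have "(F_disc has_real_derivative - (q/(1-q)) * T - (2*w/q) * sqrt T + ((1-q)/q) * (T+1)) (at T)"
    unfolding F_disc_def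
    by (intro DERIV_add DERIV_diff DERIV_cmult DERIV_T_sqrt_T[OF T]) (auto intro!: derivative_eq_intros)
  moreover have "- (q/(1-q)) * T - (2*w/q) * sqrt T + ((1-q)/q) * (T+1) = -q*T/(1-q) - disc_root T"
    unfolding disc_root_def using q_pos by (simp add: field_simps)
  ultimately show "(F_disc has_real_derivative -q*T/(1-q) - disc_root T) (at T within {a..b})"
    by (metis has_field_derivative_at_within)
qed

lemma has_integral_F_floor:
  assumes "a \<le> b"
  shows "((\<lambda>T. 1 - q*T/(1-q)) has_integral (F_floor b - F_floor a)) {a..b}"
proof (rule fundamental_theorem_of_calculus[OF assms],
    unfold has_real_derivative_iff_has_vector_derivative[symmetric])
  fix T
  have "(F_floor has_real_derivative 1 - (q/(1-q)) * T) (at T)"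
    unfolding F_floor_def by (intro DERIV_diff DERIV_cmult DERIV_ident) (auto intro!: derivative_eq_intros)
  thus "(F_floor has_real_derivative 1 - q*T/(1-q)) (at T within {a..b})"
    by (metis has_field_derivative_at_within times_divide_eq_left)
qed

lemma le_T_disc_iff: "T \<le> T_disc \<longleftrightarrow> w * sqrt T \<le> 1-q"
  unfolding T_disc_def using w_pos q_less_half
  by (simp add: le_square_iff_sqrt_le le_divide_eq mult.commute)

lemma T_disc_le_iff: "T_disc \<le> T \<longleftrightarrow> 1-q \<le> w * sqrt T"
  unfolding T_disc_def using w_pos q_less_half
  by (simp add: square_le_iff_le_sqrt divide_le_eq mult.commute)

lemma le_T_floor_iff: "T \<le> T_floor \<longleftrightarrow> (1-q) * sqrt T \<le> w*(1+v)"
  unfolding T_floor_def using w_pos v_pos q_less_half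
  by (simp add: le_square_iff_sqrt_le le_divide_eq mult.commute)

lemma T_floor_le_iff: "T_floor \<le> T \<longleftrightarrow> w*(1+v) \<le> (1-q) * sqrt T"
  unfolding T_floor_def using w_pos v_pos q_less_half
  by (simp add: square_le_iff_le_sqrt divide_le_eq mult.commute)

lemma has_integral_section_before_floor:
  assumes "1 \<le> a" "a \<le> b" "b \<le> T_disc" "b \<le> T_floor"
  shows "(section_length has_integral (F_disc b - F_disc a)) {a..b}"
proof (rule has_integral_eq[OF _ has_integral_F_disc])
  fix T assume "T \<in> {a..b}"
  hence "1 \<le> T" "T \<le> T_disc" "T \<le> T_floor" using assms by auto
  thus "-q*T/(1-q) - disc_root T = section_length T"
    using section_length_before_floor[of "sqrt T"] by (simp add: le_T_disc_iff le_T_floor_iff)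
qed (use assms in auto)

lemma has_integral_section_after_floor:
  assumes "1 \<le> a" "a \<le> b" "T_floor \<le> a" "b \<le> T_disc" "b \<le> T_edge"
  shows "(section_length has_integral (F_floor b - F_floor a)) {a..b}"
proof (rule has_integral_eq[OF _ has_integral_F_floor])
  fix T assume "T \<in> {a..b}"
  hence "1 \<le> T" "T \<le> T_disc" "T_floor \<le> T" "T \<le> T_edge" using assms by auto
  moreover from \<open>T \<le> T_edge\<close> have "q*T \<le> 1-q"
    using q_pos by (simp add: T_edge_def le_divide_eq mult.commute)
  ultimately show "1 - q*T/(1-q) = section_length T"
    using section_length_after_floor[of "sqrt T"] by (simp add: le_T_disc_iff T_floor_le_iff)
qed (use assms in auto)

lemma has_integral_section_beyond:
  assumes "1 \<le> a" "T_edge \<le> a \<or> T_disc \<le> a"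
  shows "(section_length has_integral 0) {a..b}"
proof (rule has_integral_eq[OF _ has_integral_0])
  fix T assume "T \<in> {a..b}"
  hence "1 \<le> T" "T_edge \<le> T \<or> T_disc \<le> T" using assms by auto
  moreover have "T_edge \<le> T \<Longrightarrow> 1-q \<le> q*T"
    using q_pos by (simp add: T_edge_def divide_le_eq mult.commute)
  ultimately show "0 = section_length T"
    using section_length_beyond_edge section_length_beyond_disc[of "sqrt T"]
    by (auto simp: T_disc_le_iff)
qed

section \<open>Order of the breakpoints\<close>

lemma one_le_T_disc: "1 \<le> T_disc"
proof -
  have "(1-q)^2 = w^2 + q^2" using w_square by (simp add: power2_eq_square algebra_simps)
  hence "w^2 \<le> (1-q)^2" by simp
  hence "w \<le> 1-q" by (rule power2_le_imp_le) (use q_less_half in simp)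
  thus ?thesis using le_T_disc_iff[of 1] by simp
qed

lemma one_le_T_edge: "1 \<le> T_edge"
  unfolding T_edge_def using q_pos q_less_half by simp

lemma T_floor_le_T_edge: "T_floor \<le> T_edge"
proof -
  have "(1-q)*(1-q)^2 - (w*(1+v))^2*q = (1+v)^2*(q+v-1)^2"
    using w_square v_square by algebra
  hence "(w*(1+v))^2*q \<le> (1-q)*(1-q)^2" by (smt (verit) zero_le_power2 mult_nonneg_nonneg)
  hence "(w*(1+v))^2/(1-q)^2 \<le> (1-q)/q" using q_pos q_less_half by (simp add: divide_le_divide_iff)
  thus ?thesis unfolding T_floor_def T_edge_def by (simp add: power_divide)
qed

lemma one_le_T_floor_iff: "1 \<le> T_floor \<longleftrightarrow> v \<le> 2/3"
proof -
  have diff: "(w*(1+v))^2 - (1-q)^2 = (1+v)^2 * v * (2 - 3 * v)" using w_square v_square by algebra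
  have pos: "0 < (1+v)^2 * v" using v_pos by simp
  have "1 \<le> T_floor \<longleftrightarrow> (1-q)^2 \<le> (w*(1+v))^2"
    unfolding T_floor_def using q_less_half by (simp add: power_divide le_divide_eq)
  also have "\<dots> \<longleftrightarrow> (1+v)^2 * v * 0 \<le> (1+v)^2 * v * (2 - 3 * v)" unfolding diff[symmetric] by simp
  also have "\<dots> \<longleftrightarrow> v \<le> 2/3" unfolding mult_le_cancel_left_pos[OF pos] by linarith
  finally show ?thesis .
qed

lemma T_disc_le_T_floor:
  assumes "q + v \<le> 1"
  shows "T_disc \<le> T_floor"
proof -
  have "w*(1+v)*w - (1-q)*(1-q) = v * (1+v) * (1 - q - v)" using w_square v_square by algebra
  moreover have "0 \<le> v * (1+v) * (1 - q - v)" using assms v_pos by simp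
  ultimately have "(1-q)*(1-q) \<le> w*(1+v)*w" by simp
  hence "(1-q)/w \<le> w*(1+v)/(1-q)" using w_pos q_less_half by (simp add: field_simps)
  thus ?thesis unfolding T_disc_def T_floor_def using w_pos q_less_half by (intro power_mono) auto
qed

lemma T_disc_le_2:
  assumes "q + v \<le> 1"
  shows "T_disc \<le> 2"
proof -
  have "v^2 \<le> (1-q)^2" using assms v_pos by (intro power_mono) auto
  hence "q \<le> 1 - 2*q + q*q" using v_square by (simp add: power2_eq_square algebra_simps)
  moreover have "q*q \<le> q*(1/2)" using q_pos q_less_half by (intro mult_left_mono) auto
  ultimately have "q \<le> 2/5" by linarith
  hence "q*q \<le> q*(2/5)" using q_pos by (intro mult_left_mono) auto
  hence "(1-q)^2 \<le> 2*w^2" using \<open>q \<le> 2/5\<close> w_square by (simp add: power2_eq_square algebra_simps)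
  thus ?thesis unfolding T_disc_def using w_pos by (simp add: power_divide divide_le_eq)
qed

lemma T_edge_le_T_disc:
  assumes "1 < q + v"
  shows "T_edge \<le> T_disc"
proof -
  have "(1-q)^2 < v^2" using assms q_less_half by (intro power_strict_mono) auto
  hence "1 - 2*q \<le> (1-q)*q" using v_square by (simp add: power2_eq_square algebra_simps)
  hence "(1-q)*w^2 \<le> (1-q)^2*q" using w_square q_less_half
    by (simp add: power2_eq_square mult.assoc mult_left_mono)
  hence "(1-q)/q \<le> (1-q)^2/w^2" using q_pos w_pos by (simp add: divide_le_divide_iff)
  thus ?thesis unfolding T_edge_def T_disc_def by (simp add: power_divide)
qed

lemma T_edge_le_2:
  assumes "1 < q + v"
  shows "T_edge \<le> 2"
proof -
  have "(1-q)^2 < v^2" using assms q_less_half by (intro power_strict_mono) auto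
  hence "1 - 2*q + q*q < q" using v_square by (simp add: power2_eq_square algebra_simps)
  moreover have "0 \<le> q*q" by simp
  ultimately have "1/3 \<le> q" by linarith
  thus ?thesis unfolding T_edge_def using q_pos by (simp add: divide_le_eq)
qed

lemma le_golden_iff: "q \<le> (3 - sqrt 5)/2 \<longleftrightarrow> q + v \<le> 1"
proof -
  define c where "c = (sqrt 5 - 1)/2"
  have "0 \<le> c" unfolding c_def by simp
  have c_square: "c^2 = (3 - sqrt 5)/2" unfolding c_def by (simp add: power2_eq_square field_simps)
  have c_root: "c^2 + c = 1" unfolding c_square unfolding c_def by (simp add: field_simps)
  have "q \<le> c^2 \<longleftrightarrow> v \<le> c"
    using power_mono_iff[of v c 2] v_pos \<open>0 \<le> c\<close> v_square by simp
  moreover have "v \<le> c \<longleftrightarrow> q + v \<le> 1"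
  proof
    assume "v \<le> c"
    hence "v^2 \<le> c^2" using v_pos by (intro power_mono) auto
    thus "q + v \<le> 1" using \<open>v \<le> c\<close> v_square c_root by linarith
  next
    assume "q + v \<le> 1"
    show "v \<le> c"
    proof (rule ccontr)
      assume "\<not> v \<le> c"
      hence "c^2 < v^2" using \<open>0 \<le> c\<close> by (intro power_strict_mono) auto
      thus False using \<open>\<not> v \<le> c\<close> \<open>q + v \<le> 1\<close> v_square c_root by linarith
    qed
  qed
  ultimately show ?thesis unfolding c_square by simp
qed

lemma le_four_ninths_iff: "q \<le> 4/9 \<longleftrightarrow> v \<le> 2/3"
proof -
  have four_ninths: "sqrt (4/9) = (2/3::real)" by (simp add: real_sqrt_divide)
  have "q \<le> 4/9 \<longleftrightarrow> sqrt q \<le> sqrt (4/9)" by (rule real_sqrt_le_iff[symmetric])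
  also have "\<dots> \<longleftrightarrow> v \<le> 2/3" unfolding four_ninths v_eq ..
  finally show ?thesis .
qed

section \<open>The three regimes\<close>

lemma F_disc_value_low:
  "F_disc T_disc - F_disc 1 = (1 / (1 - 2*q)) *
     ( - (2 * (q^3 + 3*q^2 + (4 * w - 6) * q - 2 * w + 2)) / (3*q) - q^3 / (2 * (1 - q)))"
proof -
  define p where "p = 1 - q"
  have p: "0 < p" "p + q = 1" unfolding p_def using q_less_half by auto
  have sqrt_eq: "sqrt ((p/w)^2) = p/w" using w_pos p by simp
  have one_minus_2q: "1 - 2*q = w^2" using w_square by simp
  show ?thesis unfolding F_disc_def T_disc_def one_minus_2q p_def[symmetric] sqrt_eq using q_pos w_pos p
    by (simp add: field_simps) (use w_square p(2) in algebra)
qed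

lemma F_value_mid:
  "(F_disc T_floor - F_disc 1) + (F_floor T_edge - F_floor T_floor) =
     (-16 * (w - 1) * (q * v) + 2 * (q^2 * v) + 15 * q^3 + (8 * w - 25) * q^2 + q - 8 * w
       + 2 * v * (8 * w - 5) + 5)
     / (6 * (v - 1)^3 * (q * v + q))"
proof -
  define m where "m = 1 - v"
  define a where "a = 1 + v"
  have m: "0 < m" unfolding m_def using v_less_1 by simp
  have a: "0 < a" unfolding a_def using v_pos by simp
  have q_eq: "q = v^2" using v_square by simp
  have factor: "1 - v^2 = m * a" unfolding m_def a_def by (simp add: algebra_simps power2_eq_square)
  have T_floor: "T_floor = (w/m)^2"
    unfolding T_floor_def unfolding q_eq factor a_def[symmetric] using a by simp
  have T_edge: "T_edge = m * a / v^2" unfolding T_edge_def unfolding q_eq factor ..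
  have sqrt_eq: "sqrt ((w/m)^2) = w/m" using w_pos m by simp
  have v_minus_1: "v - 1 = -m" and "q * v + q = v^2 * a" unfolding m_def a_def q_eq
    by (simp_all add: algebra_simps)
  show ?thesis unfolding F_disc_def F_floor_def T_floor T_edge sqrt_eq v_minus_1 \<open>q * v + q = v^2 * a\<close>
    unfolding q_eq factor using v_pos w_pos m a
    by (simp add: field_simps) (use w_square[unfolded q_eq] m_def a_def in algebra)
qed

lemma F_floor_value_high: "F_floor T_edge - F_floor 1 = (1 - 2*q)^2 / (2 * q * (1 - q))"
proof -
  define p where "p = 1 - q"
  have p: "0 < p" "p + q = 1" unfolding p_def using q_less_half by auto
  show ?thesis unfolding F_floor_def T_edge_def p_def[symmetric] using q_pos p
    by (simp add: field_simps) (use p(2) in algebra)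
qed

lemma p3_PD_low:
  assumes "q \<le> (3 - sqrt 5)/2"
  shows "p3_PD q = (1 / (1 - 2*q)) *
     ( - (2 * (q^3 + 3*q^2 + (4 * w - 6) * q - 2 * w + 2)) / (3*q) - q^3 / (2 * (1 - q)))"
proof -
  have "q + v \<le> 1" using assms le_golden_iff by simp
  hence "T_disc \<le> T_floor" "T_disc \<le> 2" using T_disc_le_T_floor T_disc_le_2 by auto
  hence "(section_length has_integral ((F_disc T_disc - F_disc 1) + 0)) {1..2}"
    by (intro has_integral_combine[OF one_le_T_disc]
        has_integral_section_before_floor[OF order.refl one_le_T_disc order.refl]
        has_integral_section_beyond[OF one_le_T_disc]) auto
  thus ?thesis using p3_PD_eq_integral F_disc_value_low by simp
qed

lemma p3_PD_mid:
  assumes "\<not> q \<le> (3 - sqrt 5)/2" and "q \<le> 4/9"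
  shows "p3_PD q =
     (-16 * (w - 1) * (q * v) + 2 * (q^2 * v) + 15 * q^3 + (8 * w - 25) * q^2 + q - 8 * w
       + 2 * v * (8 * w - 5) + 5)
     / (6 * (v - 1)^3 * (q * v + q))"
proof -
  have edge: "T_edge \<le> T_disc" "T_edge \<le> 2"
    using assms(1) le_golden_iff T_edge_le_T_disc T_edge_le_2 by auto
  have floor: "1 \<le> T_floor" using assms(2) le_four_ninths_iff one_le_T_floor_iff by simp
  have before: "(section_length has_integral (F_disc T_floor - F_disc 1)) {1..T_floor}"
    using has_integral_section_before_floor[OF order.refl floor _ order.refl]
      T_floor_le_T_edge edge(1) by simp
  have "(section_length has_integral ((F_floor T_edge - F_floor T_floor) + 0)) {T_floor..2}"
    by (intro has_integral_combine[OF T_floor_le_T_edge edge(2)]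
        has_integral_section_after_floor[OF floor T_floor_le_T_edge order.refl edge(1) order.refl]
        has_integral_section_beyond[OF one_le_T_edge]) simp
  hence "(section_length has_integral
      ((F_disc T_floor - F_disc 1) + ((F_floor T_edge - F_floor T_floor) + 0))) {1..2}"
    using floor T_floor_le_T_edge edge(2) by (intro has_integral_combine[OF floor _ before]) simp_all
  thus ?thesis using p3_PD_eq_integral F_value_mid by simp
qed

lemma p3_PD_high:
  assumes "\<not> q \<le> 4/9"
  shows "p3_PD q = (1 - 2*q)^2 / (2 * q * (1 - q))"
proof -
  have "1 < q + v" using assms le_four_ninths_iff by simp
  hence edge: "T_edge \<le> T_disc" "T_edge \<le> 2" using T_edge_le_T_disc T_edge_le_2 by auto
  have "T_floor \<le> 1" using assms le_four_ninths_iff one_le_T_floor_iff by simp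
  hence "(section_length has_integral ((F_floor T_edge - F_floor 1) + 0)) {1..2}"
    by (intro has_integral_combine[OF one_le_T_edge edge(2)]
        has_integral_section_after_floor[OF order.refl one_le_T_edge _ edge(1) order.refl]
        has_integral_section_beyond[OF one_le_T_edge]) simp_all
  thus ?thesis using p3_PD_eq_integral F_floor_value_high by simp
qed

end

lemma golden_le_four_ninths: "(3 - sqrt 5)/2 \<le> (4/9::real)"
proof -
  have "19/9 \<le> sqrt 5" by (rule real_le_rsqrt) (simp add: power2_eq_square)
  thus ?thesis by simp
qed

theorem theorem2p6:
  fixes q :: real
  assumes "0 < q" and "q < 1/2"
  shows "p3_PD q =
    (if q \<le> (3 - sqrt 5) / 2 then
       (1 / (1 - 2*q)) *
         ( - (2 * (q^3 + 3*q^2 + (4 * sqrt (1 - 2*q) - 6) * q - 2 * sqrt (1 - 2*q) + 2)) / (3*q)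
           - q^3 / (2 * (1 - q)))
     else if q \<le> 4/9 then
       (-16 * (sqrt (1 - 2*q) - 1) * (q * sqrt q) + 2 * (q^2 * sqrt q) + 15 * q^3
         + (8 * sqrt (1 - 2*q) - 25) * q^2 + q - 8 * sqrt (1 - 2*q)
         + 2 * sqrt q * (8 * sqrt (1 - 2*q) - 5) + 5)
       / (6 * (sqrt q - 1)^3 * (q * sqrt q + q))
     else (1 - 2*q)^2 / (2 * q * (1 - q)))"
proof -
  interpret PD_mutation q "sqrt (1 - 2*q)" "sqrt q"
    using assms by unfold_locales auto
  consider "q \<le> (3 - sqrt 5)/2" | "\<not> q \<le> (3 - sqrt 5)/2" "q \<le> 4/9" | "\<not> q \<le> 4/9"
    by blast
  then show ?thesis
  proof cases
    case 1
    then show ?thesis using p3_PD_low by simp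
  next
    case 2
    then show ?thesis using p3_PD_mid by simp
  next
    case 3
    moreover from 3 have "\<not> q \<le> (3 - sqrt 5)/2" using golden_le_four_ninths by linarith
    ultimately show ?thesis using p3_PD_high by simp
  qed
qed

end
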